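(* Let $\mathcal E$ be a nonlinear Dirichlet form on $L^2(\mu)$. If $1\in M(\mathcal E_e)$ and $\|1\|_{L_e}=0$, then $\ker\|\cdot\|_{L_e}=L^0(X,\mathfrak A_{\rm inv},\mu)$. In particular, $\ker\|\cdot\|_{L_e}=\mathbb R\cdot1$ implies that $\mathcal E$ is irreducible.
   Context: $(X,\mathfrak A,\mu)$ is $\sigma$-finite; $L^0(\mu)$ carries local convergence in measure. A nonlinear Dirichlet form is a lower semicontinuous convex $\mathcal E\colon L^2(\mu)\to[0,\infty]$ with $\mathcal E(-f)=\mathcal E(f)$, $\mathcal E(0)=0$, such that $\mathcal E(f+Cg)+\mathcal E(f-Cg)\le\mathcal E(f+g)+\mathcal E(f-g)$ for all $f,g$ and every 1-Lipschitz $C\colon\mathbb R\to\mathbb R$ with $C(0)=0$. $\mathcal E_e$ is the lower semicontinuous relaxation on $L^0(\mu)$ (w.r.t. local convergence in measure) of $\mathcal E$ extended by $+\infty$ outside $L^2(\mu)$ (it exists for nonlinear Dirichlet forms); $M(\mathcal E_e)=\{f:\lim_{\lambda\to0+}\mathcal E_e(\lambda f)=0\}$, $\|f\|_{L_e}=\inf\{\lambda>0:\mathcal E_e(\lambda^{-1}f)\le1\}$. A measurable $A$ is $\mathcal E$-invariant if $\mathcal E(1_Af)\le\mathcal E(f)$ for all $f\in L^2(\mu)$; $\mathfrak A_{\rm inv}$ is the $\sigma$-algebra of all $A$ such that $A$ or $X\setminus A$ is $\mathcal E$-invariant; $L^0(X,\mathfrak A_{\rm inv},\mu)$ denotes the $\mathfrak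 A_{\rm inv}$-measurable elements of $L^0(\mu)$. $\mathcal E$ is irreducible if every invariant set is null or co-null. *)

theory Defs
  imports "HOL-Analysis.Analysis"
begin

text \<open>Elements of L^0 / L^2 are represented by measurable real functions; all notions
below respect equality almost everywhere.\<close>

definition L2 :: "'a measure \<Rightarrow> ('a \<Rightarrow> real) set" where
  "L2 M = {f. f \<in> borel_measurable M \<and> integrable M (\<lambda>x. (f x)^2)}"

text \<open>Nonlinear Dirichlet form on L^2(M). The functional is given on representatives and
is required to be independent of the choice of representative.\<close>
definition nonlinear_dirichlet_form :: "'a measure \<Rightarrow> (('a \<Rightarrow> real) \<Rightarrow> ennreal) \<Rightarrow> bool" where
  "nonlinear_dirichlet_form M E \<longleftrightarrow>
     (\<forall>f\<in>L2 M. \<forall>g\<in>L2 M. (AE x in M. f x = g x) \<longrightarrow> E f = E g) \<and>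
     (\<forall>f\<in>L2 M. \<forall>g\<in>L2 M. \<forall>t::real. 0 \<le> t \<and> t \<le> 1 \<longrightarrow>
        E (\<lambda>x. t * f x + (1 - t) * g x) \<le> ennreal t * E f + ennreal (1 - t) * E g) \<and>
     (\<forall>fs f. (\<forall>n. fs n \<in> L2 M) \<and> f \<in> L2 M \<and>
        ((\<lambda>n. integral\<^sup>L M (\<lambda>x. (fs n x - f x)^2)) \<longlonglongrightarrow> 0)
        \<longrightarrow> E f \<le> liminf (\<lambda>n. E (fs n))) \<and>
     (\<forall>f\<in>L2 M. E (\<lambda>x. - f x) = E f) \<and>
     E (\<lambda>x. 0) = 0 \<and>
     (\<forall>f\<in>L2 M. \<forall>g\<in>L2 M. \<forall>C::real \<Rightarrow> real.
        (\<forall>s t. \<bar>C s - C t\<bar> \<le> \<bar>s - t\<bar>) \<and> C 0 = 0 \<longrightarrow>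
        E (\<lambda>x. f x + C (g x)) + E (\<lambda>x. f x - C (g x))
          \<le> E (\<lambda>x. f x + g x) + E (\<lambda>x. f x - g x))"

definition conv_loc_meas :: "'a measure \<Rightarrow> (nat \<Rightarrow> 'a \<Rightarrow> real) \<Rightarrow> ('a \<Rightarrow> real) \<Rightarrow> bool" where
  "conv_loc_meas M fs f \<longleftrightarrow>
     (\<forall>A\<in>sets M. emeasure M A < \<infinity> \<longrightarrow> (\<forall>\<epsilon>>0.
        ((\<lambda>n. emeasure M {x\<in>A. \<epsilon> < \<bar>fs n x - f x\<bar>}) \<longlonglongrightarrow> 0)))"

definition ext_L2 :: "'a measure \<Rightarrow> (('a \<Rightarrow> real) \<Rightarrow> ennreal) \<Rightarrow> ('a \<Rightarrow> real) \<Rightarrow> ennreal" where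
  "ext_L2 M E f = (if f \<in> L2 M then E f else \<infinity>)"

text \<open>Lower semicontinuous relaxation on L^0 w.r.t. local convergence in measure
(sequential form; the topology is metrizable since M is sigma-finite).\<close>
definition E_e :: "'a measure \<Rightarrow> (('a \<Rightarrow> real) \<Rightarrow> ennreal) \<Rightarrow> ('a \<Rightarrow> real) \<Rightarrow> ennreal" where
  "E_e M E f = Inf {liminf (\<lambda>n. ext_L2 M E (fs n)) | fs.
      (\<forall>n. fs n \<in> borel_measurable M) \<and> conv_loc_meas M fs f}"

definition M_Ee :: "'a measure \<Rightarrow> (('a \<Rightarrow> real) \<Rightarrow> ennreal) \<Rightarrow> ('a \<Rightarrow> real) set" where
  "M_Ee M E = {f. ((\<lambda>t. E_e M E (\<lambda>x. t * f x)) \<longlongrightarrow> 0) (at_right 0)}"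

text \<open>The Luxemburg-type functional; infimum of the empty set is +infinity.\<close>
definition Le_norm :: "'a measure \<Rightarrow> (('a \<Rightarrow> real) \<Rightarrow> ennreal) \<Rightarrow> ('a \<Rightarrow> real) \<Rightarrow> ennreal" where
  "Le_norm M E f = Inf {ennreal l | l. l > 0 \<and> E_e M E (\<lambda>x. f x / l) \<le> 1}"

definition E_invariant :: "'a measure \<Rightarrow> (('a \<Rightarrow> real) \<Rightarrow> ennreal) \<Rightarrow> 'a set \<Rightarrow> bool" where
  "E_invariant M E A \<longleftrightarrow> A \<in> sets M \<and>
     (\<forall>f\<in>L2 M. E (\<lambda>x. indicator A x * f x) \<le> E f)"

definition A_inv :: "'a measure \<Rightarrow> (('a \<Rightarrow> real) \<Rightarrow> ennreal) \<Rightarrow> 'a set set" where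
  "A_inv M E = {A \<in> sets M. E_invariant M E A \<or> E_invariant M E (space M - A)}"

definition irreducible_form :: "'a measure \<Rightarrow> (('a \<Rightarrow> real) \<Rightarrow> ennreal) \<Rightarrow> bool" where
  "irreducible_form M E \<longleftrightarrow>
     (\<forall>A. E_invariant M E A \<longrightarrow> emeasure M A = 0 \<or> emeasure M (space M - A) = 0)"

end

theory Submission
  imports Defs
begin

text \<open>
  Call f Le-null if every multiple t f is a limit, locally in measure, of L^2 functions of
  arbitrarily small energy; these are exactly the f with Le_norm f = 0. Convexity, the
  contraction property and lower semicontinuity make the Le-null functions a vector lattice
  that is stable under normal contractions and, by sigma-finiteness, under pointwise limits.

  If 1 is Le-null, then so is the indicator of an invariant set (multiply approximants of 1 by
  it) and hence of its complement, so every function measurable for the sigma-algebra A_inv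
  is Le-null. Conversely, for Le-null f the indicator of {f > c} is Le-null, being the
  pointwise limit of min (max (k (f - c)) 0) 1, and a set B with Le-null indicator is
  invariant: 1_B g is a limit of g clamped between -|u_n| and |u_n|, where the u_n approximate
  multiples of 1_B with small energy, and by the lattice inequalities of E clamping raises the
  energy by at most twice the energy of u_n. Irreducibility follows because the indicator of an
  invariant set is A_inv-measurable.
\<close>

section \<open>Normal contractions and square-integrable functions\<close>

definition normal_contraction :: "(real \<Rightarrow> real) \<Rightarrow> bool" where
  "normal_contraction C \<longleftrightarrow> (\<forall>s t. \<bar>C s - C t\<bar> \<le> \<bar>s - t\<bar>) \<and> C 0 = 0"

lemma normal_contractionD:
  assumes "normal_contraction C"
  shows "\<bar>C s - C t\<bar> \<le> \<bar>s - t\<bar>" and "C 0 = 0" and "\<bar>C s\<bar> \<le> \<bar>s\<bar>"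
proof -
  show lip: "\<bar>C s - C t\<bar> \<le> \<bar>s - t\<bar>" for s t using assms by (simp add: normal_contraction_def)
  show "C 0 = 0" using assms by (simp add: normal_contraction_def)
  then show "\<bar>C s\<bar> \<le> \<bar>s\<bar>" using lip[of s 0] by simp
qed

lemma normal_contraction_abs: "normal_contraction abs"
  by (simp add: normal_contraction_def abs_triangle_ineq3)

lemma borel_measurable_normal_contraction:
  assumes "g \<in> borel_measurable M" "normal_contraction C"
  shows "(\<lambda>x. C (g x)) \<in> borel_measurable M"
proof -
  have "continuous_on UNIV C"
    using assms(2) by (intro lipschitz_on_continuous_on[of 1])
      (auto simp: lipschitz_on_def dist_real_def normal_contraction_def)
  then show ?thesis by (rule borel_measurable_continuous_on[OF _ assms(1)])
qed

lemma L2_measurable: "f \<in> L2 M \<Longrightarrow> f \<in> borel_measurable M"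
  by (simp add: L2_def)

lemma L2_zero: "(\<lambda>x. 0) \<in> L2 M"
  by (simp add: L2_def)

lemma L2_dominated:
  assumes "f \<in> borel_measurable M" "g \<in> L2 M" "\<And>x. x \<in> space M \<Longrightarrow> \<bar>f x\<bar> \<le> \<bar>g x\<bar>"
  shows "f \<in> L2 M"
proof -
  have "integrable M (\<lambda>x. (f x)^2)"
  proof (rule Bochner_Integration.integrable_bound)
    show "integrable M (\<lambda>x. (g x)^2)" using assms(2) by (simp add: L2_def)
    show "AE x in M. norm ((f x)^2) \<le> norm ((g x)^2)"
      using assms(3) by (auto intro!: AE_I2 simp: abs_le_square_iff)
    show "(\<lambda>x. (f x)^2) \<in> borel_measurable M" using assms(1) by measurable
  qed
  then show ?thesis using assms(1) by (simp add: L2_def)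
qed

lemma L2_add:
  assumes "f \<in> L2 M" "g \<in> L2 M"
  shows "(\<lambda>x. f x + g x) \<in> L2 M"
proof -
  have "integrable M (\<lambda>x. (f x + g x)^2)"
  proof (rule Bochner_Integration.integrable_bound)
    show "integrable M (\<lambda>x. 2 * (f x)^2 + 2 * (g x)^2)" using assms by (auto simp: L2_def)
    have "(f x + g x)^2 \<le> 2 * (f x)^2 + 2 * (g x)^2" for x
      using zero_le_power2[of "f x - g x"] by (simp add: power2_diff power2_sum)
    then show "AE x in M. norm ((f x + g x)^2) \<le> norm (2 * (f x)^2 + 2 * (g x)^2)"
      by (auto intro!: AE_I2)
    show "(\<lambda>x. (f x + g x)^2) \<in> borel_measurable M"
      using L2_measurable[OF assms(1)] L2_measurable[OF assms(2)] by measurable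
  qed
  then show ?thesis using L2_measurable[OF assms(1)] L2_measurable[OF assms(2)] by (simp add: L2_def)
qed

lemma L2_cmult: "f \<in> L2 M \<Longrightarrow> (\<lambda>x. c * f x) \<in> L2 M"
  by (auto simp: L2_def power_mult_distrib)

lemma L2_uminus: "f \<in> L2 M \<Longrightarrow> (\<lambda>x. - f x) \<in> L2 M"
  using L2_cmult[of f M "-1"] by simp

lemma L2_normal_contraction:
  assumes "g \<in> L2 M" "normal_contraction C"
  shows "(\<lambda>x. C (g x)) \<in> L2 M"
proof (rule L2_dominated[OF _ assms(1)])
  show "(\<lambda>x. C (g x)) \<in> borel_measurable M"
    by (rule borel_measurable_normal_contraction[OF L2_measurable[OF assms(1)] assms(2)])
  show "\<bar>C (g x)\<bar> \<le> \<bar>g x\<bar>" for x by (rule normal_contractionD(3)[OF assms(2)])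
qed

lemma L2_abs: "g \<in> L2 M \<Longrightarrow> (\<lambda>x. \<bar>g x\<bar>) \<in> L2 M"
  using L2_normal_contraction[OF _ normal_contraction_abs] .

section \<open>Local convergence in measure\<close>

lemma sets_abs_diff_greater:
  fixes u v :: "'a \<Rightarrow> real"
  assumes "A \<in> sets M" "u \<in> borel_measurable M" "v \<in> borel_measurable M"
  shows "{x\<in>A. e < \<bar>u x - v x\<bar>} \<in> sets M"
proof -
  have "(\<lambda>x. u x - v x) \<in> borel_measurable M" using assms(2,3) by (rule borel_measurable_diff)
  then have "{x\<in>space M. e < \<bar>u x - v x\<bar>} \<in> sets M" by measurable
  moreover have "{x\<in>A. e < \<bar>u x - v x\<bar>} = A \<inter> {x\<in>space M. e < \<bar>u x - v x\<bar>}"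
    using sets.sets_into_space[OF assms(1)] by blast
  ultimately show ?thesis using sets.Int[OF assms(1)] by simp
qed

lemma emeasure_tendsto_0_mono:
  assumes "eventually (\<lambda>n. T n \<subseteq> S n) sequentially" "\<And>n. S n \<in> sets M"
    and "(\<lambda>n. emeasure M (S n)) \<longlonglongrightarrow> 0"
  shows "(\<lambda>n. emeasure M (T n)) \<longlonglongrightarrow> 0"
proof (rule tendsto_sandwich[OF _ _ tendsto_const assms(3)])
  show "eventually (\<lambda>n. emeasure M (T n) \<le> emeasure M (S n)) sequentially"
    using assms(1) by eventually_elim (rule emeasure_mono[OF _ assms(2)])
qed simp

lemma emeasure_Un_tendsto_0:
  assumes "\<And>n. S n \<in> sets M" "\<And>n. T n \<in> sets M"
    and "(\<lambda>n. emeasure M (S n)) \<longlonglongrightarrow> 0" "(\<lambda>n. emeasure M (T n)) \<longlonglongrightarrow> 0"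
  shows "(\<lambda>n. emeasure M (S n \<union> T n)) \<longlonglongrightarrow> 0"
proof (rule tendsto_sandwich[OF _ _ tendsto_const])
  show "eventually (\<lambda>n. emeasure M (S n \<union> T n) \<le> emeasure M (S n) + emeasure M (T n)) sequentially"
    using assms(1,2) by (simp add: emeasure_subadditive)
  show "(\<lambda>n. emeasure M (S n) + emeasure M (T n)) \<longlonglongrightarrow> 0"
    using tendsto_add[OF assms(3,4)] by simp
qed simp

lemma conv_loc_measD:
  "conv_loc_meas M fs f \<Longrightarrow> A \<in> sets M \<Longrightarrow> emeasure M A < \<infinity> \<Longrightarrow> 0 < e \<Longrightarrow>
    (\<lambda>n. emeasure M {x\<in>A. e < \<bar>fs n x - f x\<bar>}) \<longlonglongrightarrow> 0"
  by (simp add: conv_loc_meas_def)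

lemma conv_loc_meas_const: "conv_loc_meas M (\<lambda>n. f) f"
  by (simp add: conv_loc_meas_def)

lemma conv_loc_meas_bound:
  assumes fs: "conv_loc_meas M fs f" and a: "0 \<le> a"
    and meas: "\<And>n. fs n \<in> borel_measurable M" "f \<in> borel_measurable M"
    and bound: "\<And>n x. x \<in> space M \<Longrightarrow> \<bar>hs n x - h x\<bar> \<le> a * \<bar>fs n x - f x\<bar>"
  shows "conv_loc_meas M hs h"
  unfolding conv_loc_meas_def
proof (intro ballI impI allI)
  fix A :: "'a set" and e :: real
  assume A: "A \<in> sets M" "emeasure M A < \<infinity>" and e: "0 < e"
  have small: "a * (e / (a + 1)) < e" using a e by (simp add: field_simps)
  have incl: "{x\<in>A. e < \<bar>hs n x - h x\<bar>} \<subseteq> {x\<in>A. e / (a + 1) < \<bar>fs n x - f x\<bar>}" for n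
  proof (rule subsetI, rule ccontr)
    fix x assume x: "x \<in> {x\<in>A. e < \<bar>hs n x - h x\<bar>}" "x \<notin> {x\<in>A. e / (a + 1) < \<bar>fs n x - f x\<bar>}"
    then have "a * \<bar>fs n x - f x\<bar> \<le> a * (e / (a + 1))" using a by (intro mult_left_mono) auto
    then show False using x bound[of x n] small sets.sets_into_space[OF A(1)] by auto
  qed
  have "0 < e / (a + 1)" using a e by simp
  then have "(\<lambda>n. emeasure M {x\<in>A. e / (a + 1) < \<bar>fs n x - f x\<bar>}) \<longlonglongrightarrow> 0"
    by (rule conv_loc_measD[OF fs A])
  then show "(\<lambda>n. emeasure M {x\<in>A. e < \<bar>hs n x - h x\<bar>}) \<longlonglongrightarrow> 0"
    by (rule emeasure_tendsto_0_mono[OF always_eventually[OF allI[OF incl]]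
          sets_abs_diff_greater[OF A(1) meas]])
qed

lemma conv_loc_meas_add:
  assumes fs: "conv_loc_meas M fs f" and gs: "conv_loc_meas M gs g"
    and meas: "\<And>n. fs n \<in> borel_measurable M" "f \<in> borel_measurable M"
      "\<And>n. gs n \<in> borel_measurable M" "g \<in> borel_measurable M"
  shows "conv_loc_meas M (\<lambda>n x. fs n x + gs n x) (\<lambda>x. f x + g x)"
  unfolding conv_loc_meas_def
proof (intro ballI impI allI)
  fix A :: "'a set" and e :: real
  assume A: "A \<in> sets M" "emeasure M A < \<infinity>" and e: "0 < e"
  have half: "0 < e / 2" using e by simp
  have tri: "\<bar>fs n x + gs n x - (f x + g x)\<bar> \<le> \<bar>fs n x - f x\<bar> + \<bar>gs n x - g x\<bar>" for n x
    using abs_triangle_ineq[of "fs n x - f x" "gs n x - g x"] by (simp add: algebra_simps)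
  have incl: "{x\<in>A. e < \<bar>fs n x + gs n x - (f x + g x)\<bar>}
      \<subseteq> {x\<in>A. e / 2 < \<bar>fs n x - f x\<bar>} \<union> {x\<in>A. e / 2 < \<bar>gs n x - g x\<bar>}" for n
  proof
    fix x assume "x \<in> {x\<in>A. e < \<bar>fs n x + gs n x - (f x + g x)\<bar>}"
    then show "x \<in> {x\<in>A. e / 2 < \<bar>fs n x - f x\<bar>} \<union> {x\<in>A. e / 2 < \<bar>gs n x - g x\<bar>}"
      using tri[of n x] by auto
  qed
  have f_sets: "{x\<in>A. e / 2 < \<bar>fs n x - f x\<bar>} \<in> sets M" for n
    by (rule sets_abs_diff_greater[OF A(1) meas(1,2)])
  have g_sets: "{x\<in>A. e / 2 < \<bar>gs n x - g x\<bar>} \<in> sets M" for n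
    by (rule sets_abs_diff_greater[OF A(1) meas(3,4)])
  show "(\<lambda>n. emeasure M {x\<in>A. e < \<bar>fs n x + gs n x - (f x + g x)\<bar>}) \<longlonglongrightarrow> 0"
    by (rule emeasure_tendsto_0_mono[OF always_eventually[OF allI[OF incl]] sets.Un[OF f_sets g_sets]
          emeasure_Un_tendsto_0[OF f_sets g_sets conv_loc_measD[OF fs A half] conv_loc_measD[OF gs A half]]])
qed

lemma conv_loc_meas_cmult:
  assumes "conv_loc_meas M fs f" "\<And>n. fs n \<in> borel_measurable M" "f \<in> borel_measurable M"
  shows "conv_loc_meas M (\<lambda>n x. c * fs n x) (\<lambda>x. c * f x)"
  by (rule conv_loc_meas_bound[OF assms(1) abs_ge_zero[of c] assms(2,3)])
    (simp add: abs_mult flip: right_diff_distrib)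

lemma conv_loc_meas_cong_AE:
  fixes f g :: "'a \<Rightarrow> real"
  assumes fs: "conv_loc_meas M fs f" and fg: "AE x in M. f x = g x"
    and meas: "\<And>n. fs n \<in> borel_measurable M" "f \<in> borel_measurable M" "g \<in> borel_measurable M"
  shows "conv_loc_meas M fs g"
  unfolding conv_loc_meas_def
proof (intro ballI impI allI)
  fix A :: "'a set" and e :: real
  assume A: "A \<in> sets M" "emeasure M A < \<infinity>" and e: "0 < e"
  have "emeasure M {x\<in>A. e < \<bar>fs n x - f x\<bar>} = emeasure M {x\<in>A. e < \<bar>fs n x - g x\<bar>}" for n
    using fg by (intro emeasure_eq_AE sets_abs_diff_greater A meas) auto
  then show "(\<lambda>n. emeasure M {x\<in>A. e < \<bar>fs n x - g x\<bar>}) \<longlonglongrightarrow> 0"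
    using conv_loc_measD[OF fs A e] by simp
qed

lemma conv_loc_meas_subseq:
  "conv_loc_meas M fs f \<Longrightarrow> strict_mono r \<Longrightarrow> conv_loc_meas M (\<lambda>n. fs (r n)) f"
  unfolding conv_loc_meas_def using LIMSEQ_subseq_LIMSEQ by (fastforce simp: comp_def)

lemma conv_loc_meas_if_tendsto:
  assumes lim: "\<And>x. x \<in> space M \<Longrightarrow> (\<lambda>n. fs n x) \<longlonglongrightarrow> f x"
    and meas: "\<And>n. fs n \<in> borel_measurable M" "f \<in> borel_measurable M"
  shows "conv_loc_meas M fs f"
  unfolding conv_loc_meas_def
proof (intro ballI impI allI)
  fix A :: "'a set" and e :: real
  assume A: "A \<in> sets M" "emeasure M A < \<infinity>" and e: "0 < e"
  define T where "T n = (\<Union>k\<in>{n..}. {x\<in>A. e < \<bar>fs k x - f x\<bar>})" for n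
  have T_sets: "T n \<in> sets M" for n
    unfolding T_def by (intro sets.countable_UN') (auto intro: sets_abs_diff_greater[OF A(1) meas])
  have "emeasure M (T n) \<le> emeasure M A" for n
    unfolding T_def by (rule emeasure_mono[OF _ A(1)]) auto
  then have T_finite: "emeasure M (T n) \<noteq> \<infinity>" for n
    using A(2) by (metis infinity_ennreal_def le_less_trans less_irrefl)
  have "(\<Inter>n. T n) = {}"
  proof safe
    fix x assume x: "x \<in> (\<Inter>n. T n)"
    then have "x \<in> space M" using sets.sets_into_space[OF A(1)] by (auto simp: T_def)
    then obtain N where N: "\<And>k. N \<le> k \<Longrightarrow> \<bar>fs k x - f x\<bar> < e"
      using tendstoD[OF lim e] by (auto simp: eventually_sequentially dist_real_def)
    from x have "x \<in> T N" by blast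
    then obtain k where "N \<le> k" "e < \<bar>fs k x - f x\<bar>" by (auto simp: T_def)
    with N have False by fastforce
    then show "x \<in> {}" ..
  qed
  moreover have "decseq T" unfolding decseq_def T_def by (intro allI impI UN_mono) auto
  then have "(\<lambda>n. emeasure M (T n)) \<longlonglongrightarrow> emeasure M (\<Inter>n. T n)"
    using T_sets T_finite by (intro Lim_emeasure_decseq) auto
  ultimately have T_0: "(\<lambda>n. emeasure M (T n)) \<longlonglongrightarrow> 0" by simp
  have "{x\<in>A. e < \<bar>fs n x - f x\<bar>} \<subseteq> T n" for n by (auto simp: T_def)
  then show "(\<lambda>n. emeasure M {x\<in>A. e < \<bar>fs n x - f x\<bar>}) \<longlonglongrightarrow> 0"
    by (intro emeasure_tendsto_0_mono[OF always_eventually T_sets T_0] allI)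
qed

lemma conv_loc_meas_eventually_less:
  assumes "conv_loc_meas M fs f" "A \<in> sets M" "emeasure M A \<noteq> \<infinity>" "0 < e" "0 < d"
  shows "\<exists>N. \<forall>n\<ge>N. emeasure M {x\<in>A. e < \<bar>fs n x - f x\<bar>} < ennreal d"
proof -
  have "(\<lambda>n. emeasure M {x\<in>A. e < \<bar>fs n x - f x\<bar>}) \<longlonglongrightarrow> 0"
    using assms(1-4) by (intro conv_loc_measD) (auto simp: less_top)
  from order_tendstoD(2)[OF this, of "ennreal d"] show ?thesis
    using assms(5) by (simp add: eventually_sequentially)
qed

context sigma_finite_measure
begin

lemma conv_loc_meas_AE_subseq:
  fixes fs :: "nat \<Rightarrow> 'a \<Rightarrow> real"
  assumes fs: "conv_loc_meas M fs f" and meas: "\<And>n. fs n \<in> borel_measurable M" "f \<in> borel_measurable M"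
  obtains r where "strict_mono r" "AE x in M. (\<lambda>n. fs (r n) x) \<longlonglongrightarrow> f x"
proof -
  obtain A :: "nat \<Rightarrow> 'a set" where A: "range A \<subseteq> sets M" "(\<Union>i. A i) = space M"
    "\<And>i. emeasure M (A i) \<noteq> \<infinity>" "incseq A"
    using sigma_finite_incseq by metis
  have "\<exists>N. \<forall>n\<ge>N. emeasure M {x\<in>A k. (1/2)^k < \<bar>fs n x - f x\<bar>} < ennreal ((1/2)^k)" for k
    using A(1) by (intro conv_loc_meas_eventually_less[OF fs _ A(3)]) auto
  then obtain N where N: "\<And>k n. N k \<le> n \<Longrightarrow> emeasure M {x\<in>A k. (1/2)^k < \<bar>fs n x - f x\<bar>} < ennreal ((1/2)^k)"
    by metis
  define r where "r k = k + (\<Sum>i\<le>k. N i)" for k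
  have r: "strict_mono r" by (rule strict_monoI_Suc) (simp add: r_def)
  have "N k \<le> r k" for k unfolding r_def by (intro trans_le_add2 member_le_sum) auto
  define D where "D k = {x\<in>A k. (1/2)^k < \<bar>fs (r k) x - f x\<bar>}" for k
  have A_sets: "A k \<in> sets M" for k using A(1) by auto
  have D_sets: "D k \<in> sets M" for k unfolding D_def by (rule sets_abs_diff_greater[OF A_sets meas])
  have D_less: "emeasure M (D k) < ennreal ((1/2)^k)" for k unfolding D_def by (rule N) fact
  have D_finite: "emeasure M (D k) < \<infinity>" for k using D_less[of k] by (rule order.strict_trans) simp
  have "measure M (D k) \<le> (1/2)^k" for k
    unfolding measure_def by (intro enn2real_leI less_imp_le[OF D_less]) simp
  then have "summable (\<lambda>k. measure M (D k))"
    by (intro summable_comparison_test'[OF summable_geometric[of "1/2::real"]]) auto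
  then have "AE x in M. eventually (\<lambda>k. x \<in> space M - D k) sequentially"
    by (rule borel_cantelli_AE1[OF D_sets D_finite])
  then have "AE x in M. (\<lambda>k. fs (r k) x) \<longlonglongrightarrow> f x"
  proof eventually_elim
    case (elim x)
    then have "x \<in> space M" using eventually_happens[OF elim] by auto
    then obtain i where "x \<in> A i" using A(2) by blast
    then have "eventually (\<lambda>k. x \<in> A k) sequentially"
      using A(4) by (auto simp: eventually_sequentially incseq_def)
    with elim have "eventually (\<lambda>k. norm (fs (r k) x - f x) \<le> (1/2)^k) sequentially"
      by eventually_elim (auto simp: D_def)
    then have "(\<lambda>k. fs (r k) x - f x) \<longlonglongrightarrow> 0"
      by (rule Lim_null_comparison) (simp add: LIMSEQ_power_zero)
    then show ?case by (simp add: LIM_zero_iff)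
  qed
  with r show thesis by (rule that)
qed

lemma emeasure_Diff_incseq_tendsto_0:
  assumes A: "range A \<subseteq> sets M" "incseq A" "(\<Union>i. A i) = space M"
    and B: "B \<in> sets M" "emeasure M B < \<infinity>"
  shows "(\<lambda>k. emeasure M (B - A k)) \<longlonglongrightarrow> 0"
proof -
  have "decseq (\<lambda>k. B - A k)" using A(2) unfolding decseq_def incseq_def by blast
  moreover have "emeasure M (B - A k) < \<infinity>" for k
    by (rule order.strict_trans1[OF emeasure_mono[OF _ B(1)] B(2)]) auto
  ultimately have "(\<lambda>k. emeasure M (B - A k)) \<longlonglongrightarrow> emeasure M (\<Inter>k. B - A k)"
    using A(1) B(1) by (intro Lim_emeasure_decseq) (auto simp: less_top)
  moreover have "(\<Inter>k. B - A k) = {}" using sets.sets_into_space[OF B(1)] A(3) by auto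
  ultimately show ?thesis by (simp only: emeasure_empty)
qed

lemma conv_loc_meas_diagonal:
  fixes U :: "nat \<Rightarrow> nat \<Rightarrow> 'a \<Rightarrow> real"
  assumes U: "\<And>k. conv_loc_meas M (U k) (s k)" and s: "conv_loc_meas M s g"
    and meas: "\<And>k n. U k n \<in> borel_measurable M" "\<And>k. s k \<in> borel_measurable M" "g \<in> borel_measurable M"
  obtains N where "conv_loc_meas M (\<lambda>k. U k (N k)) g"
proof -
  obtain A :: "nat \<Rightarrow> 'a set" where A: "range A \<subseteq> sets M" "(\<Union>i. A i) = space M"
    "\<And>i. emeasure M (A i) \<noteq> \<infinity>" "incseq A"
    using sigma_finite_incseq by metis
  have A_sets: "A k \<in> sets M" for k using A(1) by auto
  have "\<exists>N. \<forall>n\<ge>N. emeasure M {x\<in>A k. inverse (Suc k) < \<bar>U k n x - s k x\<bar>} < ennreal (inverse (Suc k))"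
    for k by (intro conv_loc_meas_eventually_less[OF U A_sets A(3)]) auto
  then obtain N where N: "\<And>k. emeasure M {x\<in>A k. inverse (Suc k) < \<bar>U k (N k) x - s k x\<bar>} < ennreal (inverse (Suc k))"
    by (metis order_refl)
  define S where "S k = {x\<in>A k. inverse (Suc k) < \<bar>U k (N k) x - s k x\<bar>}" for k
  have S_sets: "S k \<in> sets M" for k unfolding S_def by (rule sets_abs_diff_greater[OF A_sets meas(1,2)])
  have inverse_0: "(\<lambda>k. ennreal (inverse (Suc k))) \<longlonglongrightarrow> 0"
    using tendsto_ennrealI[OF LIMSEQ_inverse_real_of_nat] unfolding ennreal_0 .
  have "emeasure M (S k) \<le> ennreal (inverse (Suc k))" for k
    unfolding S_def by (rule less_imp_le[OF N])
  then have S: "(\<lambda>k. emeasure M (S k)) \<longlonglongrightarrow> 0"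
    by (intro tendsto_sandwich[OF _ _ tendsto_const inverse_0] always_eventually allI) simp_all
  have "conv_loc_meas M (\<lambda>k x. U k (N k) x - s k x) (\<lambda>x. 0)" unfolding conv_loc_meas_def
  proof (intro ballI impI allI)
    fix B :: "'a set" and e :: real
    assume B: "B \<in> sets M" "emeasure M B < \<infinity>" and "0 < e"
    then obtain K where K: "inverse (Suc K) < e" using reals_Archimedean by blast
    have "{x\<in>B. e < \<bar>U k (N k) x - s k x - 0\<bar>} \<subseteq> (B - A k) \<union> S k" if "K \<le> k" for k
    proof -
      have "inverse (Suc k) < e"
        using that by (intro order.strict_trans1[OF _ K]) (simp add: le_imp_inverse_le)
      then show ?thesis by (auto simp: S_def)
    qed
    then have "eventually (\<lambda>k. {x\<in>B. e < \<bar>U k (N k) x - s k x - 0\<bar>} \<subseteq> (B - A k) \<union> S k) sequentially"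
      unfolding eventually_sequentially by blast
    moreover have "(\<lambda>k. emeasure M ((B - A k) \<union> S k)) \<longlonglongrightarrow> 0"
      by (rule emeasure_Un_tendsto_0[OF sets.Diff[OF B(1) A_sets] S_sets
            emeasure_Diff_incseq_tendsto_0[OF A(1,4,2) B] S])
    ultimately show "(\<lambda>k. emeasure M {x\<in>B. e < \<bar>U k (N k) x - s k x - 0\<bar>}) \<longlonglongrightarrow> 0"
      by (rule emeasure_tendsto_0_mono[OF _ sets.Un[OF sets.Diff[OF B(1) A_sets] S_sets]])
  qed
  moreover have "(\<lambda>x. U k (N k) x - s k x) \<in> borel_measurable M" for k
    using meas(1)[of k "N k"] meas(2)[of k] by measurable
  ultimately have "conv_loc_meas M (\<lambda>k x. U k (N k) x - s k x + s k x) (\<lambda>x. 0 + g x)"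
    by (rule conv_loc_meas_add[OF _ s _ borel_measurable_const meas(2,3)])
  then have "conv_loc_meas M (\<lambda>k. U k (N k)) g" by simp
  then show thesis by (rule that)
qed

end

section \<open>Consequences of the axioms of a nonlinear Dirichlet form\<close>

lemma ennreal_le_if_double_le:
  assumes "(a::ennreal) + a \<le> b + b"
  shows "a \<le> b"
proof -
  have "2 * a \<le> 2 * b" using assms by (simp add: mult_2)
  then show ?thesis by (subst (asm) ennreal_mult_le_mult_iff) auto
qed

lemma abs_clamp_le: "0 \<le> a \<Longrightarrow> \<bar>max (min s a) (- a)\<bar> \<le> \<bar>s\<bar>" for s a :: real
  by (auto simp: min_def max_def)

lemma abs_clamp_diff_le: "\<bar>max (min s a) (- a) - max (min s b) (- b)\<bar> \<le> \<bar>a - b\<bar>" for s a b :: real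
  by (auto simp: min_def max_def abs_if)

locale nl_dirichlet_form =
  fixes M :: "'a measure" and E :: "('a \<Rightarrow> real) \<Rightarrow> ennreal"
  assumes nonlinear_dirichlet_form: "nonlinear_dirichlet_form M E"
begin

lemma E_convex:
  "f \<in> L2 M \<Longrightarrow> g \<in> L2 M \<Longrightarrow> 0 \<le> t \<Longrightarrow> t \<le> 1 \<Longrightarrow>
    E (\<lambda>x. t * f x + (1 - t) * g x) \<le> ennreal t * E f + ennreal (1 - t) * E g"
  using nonlinear_dirichlet_form unfolding nonlinear_dirichlet_form_def by blast

lemma E_lsc:
  "(\<And>n. fs n \<in> L2 M) \<Longrightarrow> f \<in> L2 M \<Longrightarrow> (\<lambda>n. integral\<^sup>L M (\<lambda>x. (fs n x - f x)^2)) \<longlonglongrightarrow> 0 \<Longrightarrow>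
    E f \<le> liminf (\<lambda>n. E (fs n))"
  using nonlinear_dirichlet_form unfolding nonlinear_dirichlet_form_def by blast

lemma E_uminus: "f \<in> L2 M \<Longrightarrow> E (\<lambda>x. - f x) = E f"
  using nonlinear_dirichlet_form unfolding nonlinear_dirichlet_form_def by blast

lemma E_zero: "E (\<lambda>x. 0) = 0"
  using nonlinear_dirichlet_form unfolding nonlinear_dirichlet_form_def by blast

lemma E_normal_contraction_ineq:
  "f \<in> L2 M \<Longrightarrow> g \<in> L2 M \<Longrightarrow> normal_contraction C \<Longrightarrow>
    E (\<lambda>x. f x + C (g x)) + E (\<lambda>x. f x - C (g x)) \<le> E (\<lambda>x. f x + g x) + E (\<lambda>x. f x - g x)"
  using nonlinear_dirichlet_form unfolding nonlinear_dirichlet_form_def normal_contraction_def by blast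

lemma E_normal_contraction_le:
  assumes g: "g \<in> L2 M" and C: "normal_contraction C"
  shows "E (\<lambda>x. C (g x)) \<le> E g"
proof (rule ennreal_le_if_double_le)
  have "E (\<lambda>x. 0 + C (g x)) + E (\<lambda>x. 0 - C (g x)) \<le> E (\<lambda>x. 0 + g x) + E (\<lambda>x. 0 - g x)"
    by (rule E_normal_contraction_ineq[OF L2_zero g C])
  then show "E (\<lambda>x. C (g x)) + E (\<lambda>x. C (g x)) \<le> E g + E g"
    using E_uminus[OF L2_normal_contraction[OF g C]] E_uminus[OF g] by simp
qed

lemma E_cmult_le:
  assumes g: "g \<in> L2 M" and t: "\<bar>t\<bar> \<le> 1"
  shows "E (\<lambda>x. t * g x) \<le> ennreal \<bar>t\<bar> * E g"
proof -
  have "E (\<lambda>x. \<bar>t\<bar> * g x + (1 - \<bar>t\<bar>) * 0) \<le> ennreal \<bar>t\<bar> * E g + ennreal (1 - \<bar>t\<bar>) * E (\<lambda>x. 0)"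
    using t by (intro E_convex[OF g L2_zero]) auto
  moreover have "E (\<lambda>x. t * g x) = E (\<lambda>x. \<bar>t\<bar> * g x)"
    using E_uminus[OF L2_cmult[OF g, of "\<bar>t\<bar>"]] by (cases "0 \<le> t") simp_all
  ultimately show ?thesis by (simp add: E_zero)
qed

lemma E_midpoint_le:
  assumes "u \<in> L2 M" "v \<in> L2 M" "E u \<le> B" "E v \<le> B"
  shows "E (\<lambda>x. (u x + v x) / 2) \<le> B"
proof -
  have "E (\<lambda>x. (u x + v x) / 2) = E (\<lambda>x. (1/2) * u x + (1 - 1/2) * v x)"
    by (simp add: add_divide_distrib)
  also have "\<dots> \<le> ennreal (1/2) * E u + ennreal (1/2) * E v"
    using E_convex[OF assms(1,2), of "1/2"] by simp
  also have "\<dots> \<le> ennreal (1/2) * B + ennreal (1/2) * B"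
    using assms(3,4) by (intro add_mono mult_left_mono) simp_all
  also have "\<dots> = ennreal (1/2 + 1/2) * B"
    by (subst ennreal_plus) (simp_all add: distrib_right)
  also have "\<dots> = B"
    by simp
  finally show ?thesis .
qed

lemma E_min_max_le:
  assumes g: "g \<in> L2 M" and w: "w \<in> L2 M"
  shows "E (\<lambda>x. min (g x) (w x)) + E (\<lambda>x. max (g x) (w x)) \<le> E g + E w"
proof -
  let ?f = "\<lambda>x. (g x + w x) / 2" and ?h = "\<lambda>x. (g x - w x) / 2"
  have "E (\<lambda>x. ?f x + - \<bar>?h x\<bar>) + E (\<lambda>x. ?f x - - \<bar>?h x\<bar>) \<le> E (\<lambda>x. ?f x + ?h x) + E (\<lambda>x. ?f x - ?h x)"
  proof (rule E_normal_contraction_ineq)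
    show "?f \<in> L2 M" "?h \<in> L2 M"
      using L2_cmult[OF L2_add[OF g w], of "1/2"] L2_cmult[OF L2_add[OF g L2_uminus[OF w]], of "1/2"]
      by simp_all
    show "normal_contraction (\<lambda>s. - \<bar>s\<bar>)"
      by (simp add: normal_contraction_def abs_triangle_ineq3 abs_minus_commute)
  qed
  moreover have "(\<lambda>x. ?f x + - \<bar>?h x\<bar>) = (\<lambda>x. min (g x) (w x))" "(\<lambda>x. ?f x - - \<bar>?h x\<bar>) = (\<lambda>x. max (g x) (w x))"
    "(\<lambda>x. ?f x + ?h x) = g" "(\<lambda>x. ?f x - ?h x) = w"
    by (auto simp: fun_eq_iff min_def max_def abs_real_def field_simps)
  ultimately show ?thesis by simp
qed

lemma E_clamp_le:
  assumes g: "g \<in> L2 M" and w: "w \<in> L2 M"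
  shows "E (\<lambda>x. max (min (g x) (w x)) (- w x)) \<le> E g + E w + E w"
proof -
  have min_L2: "(\<lambda>x. min (g x) (w x)) \<in> L2 M"
  proof (rule L2_dominated[OF _ L2_add[OF L2_abs[OF g] L2_abs[OF w]]])
    show "(\<lambda>x. min (g x) (w x)) \<in> borel_measurable M"
      using L2_measurable[OF g] L2_measurable[OF w] by measurable
    show "\<bar>min (g x) (w x)\<bar> \<le> \<bar>\<bar>g x\<bar> + \<bar>w x\<bar>\<bar>" for x
      by (simp add: min_def)
  qed
  have "E (\<lambda>x. max (min (g x) (w x)) (- w x)) \<le> E (\<lambda>x. min (g x) (w x)) + E (\<lambda>x. - w x)"
    by (rule order_trans[OF add_increasing[OF zero_le order_refl] E_min_max_le[OF min_L2 L2_uminus[OF w]]])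
  also have "\<dots> \<le> E g + E w + E w"
    unfolding E_uminus[OF w]
    by (rule add_right_mono[OF order_trans[OF add_increasing2[OF zero_le order_refl] E_min_max_le[OF g w]]])
  finally show ?thesis .
qed

lemma E_lsc_AE:
  assumes w: "\<And>n. w n \<in> L2 M" "w0 \<in> L2 M" and G: "G \<in> L2 M"
    and lim: "AE x in M. (\<lambda>n. w n x) \<longlonglongrightarrow> w0 x"
    and bound: "\<And>n x. x \<in> space M \<Longrightarrow> \<bar>w n x\<bar> \<le> G x"
    and E_le: "\<And>n. E (w n) \<le> B"
  shows "E w0 \<le> B"
proof -
  have "(\<lambda>n. integral\<^sup>L M (\<lambda>x. (w n x - w0 x)^2)) \<longlonglongrightarrow> integral\<^sup>L M (\<lambda>x. 0)"
  proof (rule integral_dominated_convergence)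
    show "integrable M (\<lambda>x. 2 * (G x)^2 + 2 * (w0 x)^2)" using w(2) G by (auto simp: L2_def)
    show "(\<lambda>x. (w n x - w0 x)^2) \<in> borel_measurable M" for n
      using L2_measurable[OF w(1)] L2_measurable[OF w(2)] by measurable
    show "AE x in M. (\<lambda>n. (w n x - w0 x)^2) \<longlonglongrightarrow> 0"
      using lim
    proof eventually_elim
      case (elim x)
      then have "(\<lambda>n. (w n x - w0 x)^2) \<longlonglongrightarrow> (w0 x - w0 x)^2" by (intro tendsto_intros)
      then show ?case by simp
    qed
    show "AE x in M. norm ((w n x - w0 x)^2) \<le> 2 * (G x)^2 + 2 * (w0 x)^2" for n
    proof (rule AE_I2)
      fix x assume "x \<in> space M"
      then have "(w n x)^2 \<le> (G x)^2"
        using bound[of x n] abs_le_square_iff[of "w n x" "G x"] by simp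
      moreover have "(w n x - w0 x)^2 \<le> 2 * (w n x)^2 + 2 * (w0 x)^2"
        using zero_le_power2[of "w n x + w0 x"] by (simp add: power2_diff power2_sum)
      ultimately show "norm ((w n x - w0 x)^2) \<le> 2 * (G x)^2 + 2 * (w0 x)^2" by simp
    qed
  qed simp
  then have "E w0 \<le> liminf (\<lambda>n. E (w n))" by (intro E_lsc[OF w]) simp
  also have "\<dots> \<le> B" by (intro Liminf_le) (simp_all add: E_le)
  finally show ?thesis .
qed

end

locale sigma_finite_nl_dirichlet_form = sigma_finite_measure M + nl_dirichlet_form M E
  for M :: "'a measure" and E :: "('a \<Rightarrow> real) \<Rightarrow> ennreal"
begin

lemma E_lsc_conv_loc_meas:
  assumes w: "\<And>n. w n \<in> L2 M" "w0 \<in> L2 M" and G: "G \<in> L2 M" and conv: "conv_loc_meas M w w0"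
    and bound: "\<And>n x. x \<in> space M \<Longrightarrow> \<bar>w n x\<bar> \<le> G x" and E_le: "\<And>n. E (w n) \<le> B"
  shows "E w0 \<le> B"
proof -
  obtain r where "strict_mono r" "AE x in M. (\<lambda>n. w (r n) x) \<longlonglongrightarrow> w0 x"
    using conv_loc_meas_AE_subseq[OF conv L2_measurable[OF w(1)] L2_measurable[OF w(2)]] .
  then show ?thesis by (intro E_lsc_AE[OF w(1) w(2) G _ bound E_le])
qed

end

section \<open>The kernel of the Luxemburg functional\<close>

lemma E_e_le_if_approx:
  assumes "\<And>n. u n \<in> L2 M" "conv_loc_meas M u f" "\<And>n. E (u n) \<le> B"
  shows "E_e M E f \<le> B"
proof -
  have "E_e M E f \<le> liminf (\<lambda>n. ext_L2 M E (u n))"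
    unfolding E_e_def using assms(1,2) L2_measurable by (intro Inf_lower) blast
  also have "\<dots> \<le> B" using assms(1,3) by (intro Liminf_le) (simp_all add: ext_L2_def)
  finally show ?thesis .
qed

lemma E_e_lessE:
  assumes "E_e M E f < B"
  obtains u where "\<And>n. u n \<in> L2 M" "conv_loc_meas M u f" "\<And>n. E (u n) < B"
proof -
  obtain fs where fs: "\<And>n. fs n \<in> borel_measurable M" "conv_loc_meas M fs f"
    "liminf (\<lambda>n. ext_L2 M E (fs n)) < B"
    using assms unfolding E_e_def Inf_less_iff by blast
  have "\<not> eventually (\<lambda>n. B \<le> ext_L2 M E (fs n)) sequentially"
  proof
    assume "eventually (\<lambda>n. B \<le> ext_L2 M E (fs n)) sequentially"
    then have "B \<le> liminf (\<lambda>n. ext_L2 M E (fs n))" by (rule Liminf_bounded)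
    with fs(3) show False by simp
  qed
  then have "infinite {n. ext_L2 M E (fs n) < B}"
    by (simp add: cofinite_eq_sequentially[symmetric] eventually_cofinite not_le)
  then obtain r :: "nat \<Rightarrow> nat" where r: "strict_mono r" "\<And>n. ext_L2 M E (fs (r n)) < B"
    using infinite_enumerate by blast
  have L2: "fs (r n) \<in> L2 M" for n
    using r(2)[of n] by (auto simp: ext_L2_def split: if_splits)
  show thesis
  proof (rule that[of "\<lambda>n. fs (r n)"])
    show "conv_loc_meas M (\<lambda>n. fs (r n)) f" by (rule conv_loc_meas_subseq[OF fs(2) r(1)])
    show "E (fs (r n)) < B" for n using r(2)[of n] L2[of n] by (simp add: ext_L2_def)
  qed (rule L2)
qed

definition E_e_null :: "'a measure \<Rightarrow> (('a \<Rightarrow> real) \<Rightarrow> ennreal) \<Rightarrow> ('a \<Rightarrow> real) \<Rightarrow> bool" where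
  "E_e_null M E g \<longleftrightarrow>
     (\<forall>d>0. \<exists>u. (\<forall>n. u n \<in> L2 M) \<and> conv_loc_meas M u g \<and> (\<forall>n. E (u n) \<le> ennreal d))"

definition Le_null :: "'a measure \<Rightarrow> (('a \<Rightarrow> real) \<Rightarrow> ennreal) \<Rightarrow> ('a \<Rightarrow> real) \<Rightarrow> bool" where
  "Le_null M E f \<longleftrightarrow> (\<forall>t. E_e_null M E (\<lambda>x. t * f x))"

lemma E_e_nullE:
  assumes "E_e_null M E g" "0 < d"
  obtains u where "\<And>n. u n \<in> L2 M" "conv_loc_meas M u g" "\<And>n. E (u n) \<le> ennreal d"
  using assms unfolding E_e_null_def by blast

lemma E_e_eq_0_if_E_e_null:
  assumes "E_e_null M E g"
  shows "E_e M E g = 0"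
proof -
  have "E_e M E g \<le> 0 + ennreal d" if "0 < d" for d
    using E_e_nullE[OF assms that] E_e_le_if_approx by (metis add_0)
  then have "E_e M E g \<le> 0" by (rule ennreal_le_epsilon)
  then show ?thesis by simp
qed

lemma E_e_null_cong_AE:
  assumes "E_e_null M E g" "AE x in M. g x = h x" "g \<in> borel_measurable M" "h \<in> borel_measurable M"
  shows "E_e_null M E h"
  unfolding E_e_null_def
proof (intro allI impI)
  fix d :: real assume "0 < d"
  obtain u where u: "\<And>n. u n \<in> L2 M" "conv_loc_meas M u g" "\<And>n. E (u n) \<le> ennreal d"
    using E_e_nullE[OF assms(1) \<open>0 < d\<close>] by blast
  have "conv_loc_meas M u h"
    by (rule conv_loc_meas_cong_AE[OF u(2) assms(2) L2_measurable[OF u(1)] assms(3,4)])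
  with u show "\<exists>u. (\<forall>n. u n \<in> L2 M) \<and> conv_loc_meas M u h \<and> (\<forall>n. E (u n) \<le> ennreal d)"
    by blast
qed

lemma Le_null_cmult:
  assumes "Le_null M E f"
  shows "Le_null M E (\<lambda>x. c * f x)"
  unfolding Le_null_def
proof
  fix t :: real
  have "E_e_null M E (\<lambda>x. (t * c) * f x)" using assms by (simp add: Le_null_def)
  then show "E_e_null M E (\<lambda>x. t * (c * f x))" by (simp add: mult.assoc)
qed

lemma Le_null_cong_AE:
  assumes "Le_null M E f" "AE x in M. f x = g x" "f \<in> borel_measurable M" "g \<in> borel_measurable M"
  shows "Le_null M E g"
  unfolding Le_null_def
proof
  fix t :: real
  have "E_e_null M E (\<lambda>x. t * f x)" using assms(1) by (simp add: Le_null_def)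
  moreover have "AE x in M. t * f x = t * g x" using assms(2) by eventually_elim simp
  ultimately show "E_e_null M E (\<lambda>x. t * g x)"
    by (rule E_e_null_cong_AE) (use assms(3,4) in simp_all)
qed

lemma Le_norm_eq_0_if_Le_null:
  assumes "Le_null M E f"
  shows "Le_norm M E f = 0"
proof -
  have "Le_norm M E f \<le> 0 + ennreal d" if "0 < d" for d
  proof -
    have "E_e_null M E (\<lambda>x. (1 / d) * f x)" using assms unfolding Le_null_def by blast
    then have "E_e M E (\<lambda>x. f x / d) = 0" by (simp add: E_e_eq_0_if_E_e_null)
    then show ?thesis
      unfolding Le_norm_def using that by (intro Inf_lower) auto
  qed
  then have "Le_norm M E f \<le> 0" by (rule ennreal_le_epsilon)
  then show ?thesis by simp
qed

context nl_dirichlet_form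
begin

lemma E_e_null_zero: "E_e_null M E (\<lambda>x. 0)"
  unfolding E_e_null_def
  by (intro allI impI exI[of _ "\<lambda>n x. 0"]) (simp add: L2_zero conv_loc_meas_const E_zero)

lemma Le_null_zero: "Le_null M E (\<lambda>x. 0)"
  by (simp add: Le_null_def E_e_null_zero)

lemma E_e_null_normal_contraction:
  assumes g: "E_e_null M E g" "g \<in> borel_measurable M" and C: "normal_contraction C"
  shows "E_e_null M E (\<lambda>x. C (g x))"
  unfolding E_e_null_def
proof (intro allI impI)
  fix d :: real assume "0 < d"
  obtain u where u: "\<And>n. u n \<in> L2 M" "conv_loc_meas M u g" "\<And>n. E (u n) \<le> ennreal d"
    using E_e_nullE[OF g(1) \<open>0 < d\<close>] by blast
  have "conv_loc_meas M (\<lambda>n x. C (u n x)) (\<lambda>x. C (g x))"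
    by (rule conv_loc_meas_bound[OF u(2) zero_le_one L2_measurable[OF u(1)] g(2)])
      (simp add: normal_contractionD(1)[OF C])
  moreover have "E (\<lambda>x. C (u n x)) \<le> ennreal d" for n
    using E_normal_contraction_le[OF u(1) C] u(3) by (rule order_trans)
  ultimately show "\<exists>u. (\<forall>n. u n \<in> L2 M) \<and> conv_loc_meas M u (\<lambda>x. C (g x)) \<and> (\<forall>n. E (u n) \<le> ennreal d)"
    using L2_normal_contraction[OF u(1) C] by (intro exI[of _ "\<lambda>n x. C (u n x)"]) blast
qed

lemma E_e_null_nonneg_approxE:
  assumes h: "E_e_null M E h" "h \<in> borel_measurable M" "\<And>x. 0 \<le> h x" and "0 < d"
  obtains w where "\<And>n. w n \<in> L2 M" "conv_loc_meas M w h" "\<And>n. E (w n) \<le> ennreal d"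
    "\<And>n x. 0 \<le> w n x"
proof -
  obtain u where u: "\<And>n. u n \<in> L2 M" "conv_loc_meas M u h" "\<And>n. E (u n) \<le> ennreal d"
    using E_e_nullE[OF h(1) \<open>0 < d\<close>] by blast
  show thesis
  proof (rule that[of "\<lambda>n x. \<bar>u n x\<bar>"])
    show "(\<lambda>x. \<bar>u n x\<bar>) \<in> L2 M" for n by (rule L2_abs[OF u(1)])
    show "E (\<lambda>x. \<bar>u n x\<bar>) \<le> ennreal d" for n
      by (rule order_trans[OF E_normal_contraction_le[OF u(1) normal_contraction_abs] u(3)])
    show "conv_loc_meas M (\<lambda>n x. \<bar>u n x\<bar>) h"
    proof (rule conv_loc_meas_bound[OF u(2) zero_le_one L2_measurable[OF u(1)] h(2)])
      show "\<bar>\<bar>u n x\<bar> - h x\<bar> \<le> 1 * \<bar>u n x - h x\<bar>" for n x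
        using abs_triangle_ineq3[of "u n x" "h x"] h(3)[of x] by simp
    qed
  qed simp
qed

lemma E_e_null_midpoint:
  assumes a: "E_e_null M E (\<lambda>x. 2 * a x)" "a \<in> borel_measurable M"
    and b: "E_e_null M E (\<lambda>x. 2 * b x)" "b \<in> borel_measurable M"
  shows "E_e_null M E (\<lambda>x. a x + b x)"
  unfolding E_e_null_def
proof (intro allI impI)
  fix d :: real assume "0 < d"
  obtain u where u: "\<And>n. u n \<in> L2 M" "conv_loc_meas M u (\<lambda>x. 2 * a x)" "\<And>n. E (u n) \<le> ennreal d"
    using E_e_nullE[OF a(1) \<open>0 < d\<close>] by blast
  obtain v where v: "\<And>n. v n \<in> L2 M" "conv_loc_meas M v (\<lambda>x. 2 * b x)" "\<And>n. E (v n) \<le> ennreal d"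
    using E_e_nullE[OF b(1) \<open>0 < d\<close>] by blast
  have meas_a: "(\<lambda>x. 2 * a x) \<in> borel_measurable M" using a(2) by measurable
  have meas_b: "(\<lambda>x. 2 * b x) \<in> borel_measurable M" using b(2) by measurable
  have meas_uv: "(\<lambda>x. u n x + v n x) \<in> borel_measurable M" for n
    using L2_measurable[OF u(1)] L2_measurable[OF v(1)] by measurable
  have "conv_loc_meas M (\<lambda>n x. u n x + v n x) (\<lambda>x. 2 * a x + 2 * b x)"
    by (rule conv_loc_meas_add[OF u(2) v(2) L2_measurable[OF u(1)] meas_a L2_measurable[OF v(1)] meas_b])
  then have "conv_loc_meas M (\<lambda>n x. (1/2) * (u n x + v n x)) (\<lambda>x. (1/2) * (2 * a x + 2 * b x))"
    by (rule conv_loc_meas_cmult[OF _ meas_uv borel_measurable_add[OF meas_a meas_b]])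
  moreover have "(\<lambda>n x. (1/2) * (u n x + v n x)) = (\<lambda>n x. (u n x + v n x) / 2)"
    "(\<lambda>x. (1/2) * (2 * a x + 2 * b x)) = (\<lambda>x. a x + b x)"
    by (simp_all add: fun_eq_iff)
  ultimately have "conv_loc_meas M (\<lambda>n x. (u n x + v n x) / 2) (\<lambda>x. a x + b x)"
    by simp
  moreover have "(\<lambda>x. (u n x + v n x) / 2) \<in> L2 M" for n
    using L2_cmult[OF L2_add[OF u(1) v(1)], of "1/2"] by simp
  moreover have "E (\<lambda>x. (u n x + v n x) / 2) \<le> ennreal d" for n
    by (rule E_midpoint_le[OF u(1) v(1) u(3) v(3)])
  ultimately show "\<exists>w. (\<forall>n. w n \<in> L2 M) \<and> conv_loc_meas M w (\<lambda>x. a x + b x) \<and> (\<forall>n. E (w n) \<le> ennreal d)"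
    by (intro exI[of _ "\<lambda>n x. (u n x + v n x) / 2"]) blast
qed

lemma Le_null_add:
  assumes "Le_null M E a" "a \<in> borel_measurable M" "Le_null M E b" "b \<in> borel_measurable M"
  shows "Le_null M E (\<lambda>x. a x + b x)"
  unfolding Le_null_def
proof
  fix t :: real
  have "E_e_null M E (\<lambda>x. t * a x + t * b x)"
    using assms by (intro E_e_null_midpoint) (simp_all add: Le_null_def mult.assoc[symmetric])
  then show "E_e_null M E (\<lambda>x. t * (a x + b x))"
    by (simp add: distrib_left)
qed

lemma Le_null_diff:
  assumes "Le_null M E a" "a \<in> borel_measurable M" "Le_null M E b" "b \<in> borel_measurable M"
  shows "Le_null M E (\<lambda>x. a x - b x)"
  using Le_null_add[OF assms(1,2) Le_null_cmult[OF assms(3), of "-1"]] assms(4) by simp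

lemma Le_null_sum:
  assumes "finite Y" "\<And>y. y \<in> Y \<Longrightarrow> Le_null M E (f y)" "\<And>y. y \<in> Y \<Longrightarrow> f y \<in> borel_measurable M"
  shows "Le_null M E (\<lambda>x. \<Sum>y\<in>Y. f y x)"
  using assms
proof (induction Y rule: finite_induct)
  case empty
  then show ?case using Le_null_zero by simp
next
  case (insert y Y)
  have "Le_null M E (\<lambda>x. f y x + (\<Sum>y\<in>Y. f y x))"
    by (rule Le_null_add[of "f y" "\<lambda>x. \<Sum>y\<in>Y. f y x"]) (use insert in \<open>auto intro: borel_measurable_sum\<close>)
  then show ?case using insert by simp
qed

lemma Le_null_normal_contraction:
  assumes f: "Le_null M E f" "f \<in> borel_measurable M" and \<phi>: "normal_contraction \<phi>"
  shows "Le_null M E (\<lambda>x. \<phi> (f x))"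
  unfolding Le_null_def
proof
  fix t :: real
  show "E_e_null M E (\<lambda>x. t * \<phi> (f x))"
  proof (cases "t = 0")
    case True
    then show ?thesis using E_e_null_zero by simp
  next
    case False
    \<comment> \<open>t \<phi> (f x) = C (t f x) for a normal contraction C\<close>
    define C where "C s = t * \<phi> (s / t)" for s
    have "\<bar>C s - C u\<bar> \<le> \<bar>s - u\<bar>" for s u
    proof -
      have "\<bar>C s - C u\<bar> = \<bar>t\<bar> * \<bar>\<phi> (s / t) - \<phi> (u / t)\<bar>"
        by (simp add: C_def abs_mult flip: right_diff_distrib)
      also have "\<dots> \<le> \<bar>t\<bar> * \<bar>s / t - u / t\<bar>"
        by (intro mult_left_mono normal_contractionD(1)[OF \<phi>]) simp
      also have "\<dots> = \<bar>s - u\<bar>" using False by (simp add: abs_divide flip: diff_divide_distrib)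
      finally show ?thesis .
    qed
    then have C: "normal_contraction C"
      by (simp add: normal_contraction_def C_def normal_contractionD(2)[OF \<phi>])
    have "E_e_null M E (\<lambda>x. C (t * f x))"
      by (rule E_e_null_normal_contraction[OF _ _ C]) (use f in \<open>simp_all add: Le_null_def\<close>)
    then show ?thesis using False by (simp add: C_def)
  qed
qed

lemma Le_null_max:
  assumes "Le_null M E a" "a \<in> borel_measurable M" "Le_null M E b" "b \<in> borel_measurable M"
  shows "Le_null M E (\<lambda>x. max (a x) (b x))"
proof -
  have "Le_null M E (\<lambda>x. \<bar>a x - b x\<bar>)"
    using assms(2,4) by (intro Le_null_normal_contraction[OF Le_null_diff[OF assms] _ normal_contraction_abs]) simp
  then have "Le_null M E (\<lambda>x. (a x + b x) + \<bar>a x - b x\<bar>)"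
    using assms(2,4) by (intro Le_null_add[OF Le_null_add[OF assms]]) simp_all
  then have "Le_null M E (\<lambda>x. (1/2) * ((a x + b x) + \<bar>a x - b x\<bar>))"
    by (rule Le_null_cmult)
  moreover have "(\<lambda>x. (1/2) * ((a x + b x) + \<bar>a x - b x\<bar>)) = (\<lambda>x. max (a x) (b x))"
    by (auto simp: fun_eq_iff max_def)
  ultimately show ?thesis by simp
qed

lemma Le_null_if_Le_norm_eq_0:
  assumes f: "f \<in> borel_measurable M" and norm: "Le_norm M E f = 0"
  shows "Le_null M E f"
  unfolding Le_null_def E_e_null_def
proof (intro allI impI)
  fix t d :: real assume "0 < d"
  \<comment> \<open>any l < \<eta> gives c = t l with \<bar>c\<bar> \<le> 1, as E_cmult_le needs, and 2 \<bar>c\<bar> \<le> d\<close>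
  define \<eta> where "\<eta> = min d 1 / (2 * (\<bar>t\<bar> + 1))"
  have "0 < \<eta>" using \<open>0 < d\<close> by (simp add: \<eta>_def)
  then have "Le_norm M E f < ennreal \<eta>" using norm by simp
  then obtain l where l: "0 < l" "ennreal l < ennreal \<eta>" "E_e M E (\<lambda>x. f x / l) \<le> 1"
    unfolding Le_norm_def Inf_less_iff by blast
  have "E_e M E (\<lambda>x. f x / l) < 2" using l(3) by (rule le_less_trans) simp
  then obtain u where u: "\<And>n. u n \<in> L2 M" "conv_loc_meas M u (\<lambda>x. f x / l)" "\<And>n. E (u n) < 2"
    using E_e_lessE by blast
  define c where "c = t * l"
  have "l < \<eta>" using l(1,2) by (simp add: ennreal_less_iff)
  then have "\<bar>c\<bar> * 2 \<le> min d 1"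
    using l(1) by (simp add: c_def \<eta>_def abs_mult field_simps)
  then have c: "\<bar>c\<bar> \<le> 1" "\<bar>c\<bar> * 2 \<le> d" by linarith+
  have "conv_loc_meas M (\<lambda>n x. c * u n x) (\<lambda>x. c * (f x / l))"
    by (rule conv_loc_meas_cmult[OF u(2) L2_measurable[OF u(1)]]) (use f in simp)
  moreover have "(\<lambda>x. c * (f x / l)) = (\<lambda>x. t * f x)" using l(1) by (simp add: c_def)
  moreover have "E (\<lambda>x. c * u n x) \<le> ennreal d" for n
  proof -
    have "E (\<lambda>x. c * u n x) \<le> ennreal \<bar>c\<bar> * E (u n)" by (rule E_cmult_le[OF u(1) c(1)])
    also have "\<dots> \<le> ennreal \<bar>c\<bar> * 2" using u(3)[of n] by (intro mult_left_mono) simp_all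
    also have "\<dots> = ennreal (\<bar>c\<bar> * 2)" by (simp add: ennreal_mult)
    also have "\<dots> \<le> ennreal d" using c(2) by (rule ennreal_leI)
    finally show ?thesis .
  qed
  ultimately show "\<exists>u. (\<forall>n. u n \<in> L2 M) \<and> conv_loc_meas M u (\<lambda>x. t * f x) \<and> (\<forall>n. E (u n) \<le> ennreal d)"
    using L2_cmult[OF u(1)] by (intro exI[of _ "\<lambda>n x. c * u n x"]) auto
qed

lemma Le_norm_eq_0_iff:
  "f \<in> borel_measurable M \<Longrightarrow> Le_norm M E f = 0 \<longleftrightarrow> Le_null M E f"
  using Le_null_if_Le_norm_eq_0 Le_norm_eq_0_if_Le_null by blast

end

context sigma_finite_nl_dirichlet_form
begin

lemma E_e_null_conv_loc_meas:
  assumes s: "\<And>k. E_e_null M E (s k)" "conv_loc_meas M s g"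
    and meas: "\<And>k. s k \<in> borel_measurable M" "g \<in> borel_measurable M"
  shows "E_e_null M E g"
  unfolding E_e_null_def
proof (intro allI impI)
  fix d :: real assume "0 < d"
  have "\<forall>k. \<exists>u. (\<forall>n. u n \<in> L2 M) \<and> conv_loc_meas M u (s k) \<and> (\<forall>n. E (u n) \<le> ennreal d)"
    using s(1) \<open>0 < d\<close> by (auto simp: E_e_null_def)
  then obtain U where U: "\<And>k n. U k n \<in> L2 M" "\<And>k. conv_loc_meas M (U k) (s k)"
    "\<And>k n. E (U k n) \<le> ennreal d"
    by metis
  obtain N where "conv_loc_meas M (\<lambda>k. U k (N k)) g"
    using conv_loc_meas_diagonal[OF U(2) s(2) L2_measurable[OF U(1)] meas] .
  with U show "\<exists>u. (\<forall>n. u n \<in> L2 M) \<and> conv_loc_meas M u g \<and> (\<forall>n. E (u n) \<le> ennreal d)"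
    by (intro exI[of _ "\<lambda>k. U k (N k)"]) blast
qed

lemma Le_null_tendsto:
  assumes s: "\<And>k. Le_null M E (s k)" "\<And>x. x \<in> space M \<Longrightarrow> (\<lambda>k. s k x) \<longlonglongrightarrow> g x"
    and meas: "\<And>k. s k \<in> borel_measurable M" "g \<in> borel_measurable M"
  shows "Le_null M E g"
  unfolding Le_null_def
proof
  fix t :: real
  have "conv_loc_meas M (\<lambda>k x. t * s k x) (\<lambda>x. t * g x)"
    by (rule conv_loc_meas_if_tendsto[OF tendsto_mult_left[OF s(2)]]) (use meas in simp_all)
  then show "E_e_null M E (\<lambda>x. t * g x)"
    by (rule E_e_null_conv_loc_meas[rotated]) (use s(1) meas in \<open>simp_all add: Le_null_def\<close>)
qed

lemma Le_null_indicator_greater: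
  assumes one: "Le_null M E (\<lambda>x. 1)" and f: "Le_null M E f" "f \<in> borel_measurable M"
  shows "Le_null M E (indicator {x\<in>space M. c < f x})"
proof -
  define s where "s k = (\<lambda>x. min (max (real (Suc k) * (f x - c)) 0) 1)" for k
  have "normal_contraction (\<lambda>r. min (max r 0) 1)"
    by (auto simp: normal_contraction_def min_def max_def)
  moreover have "Le_null M E (\<lambda>x. f x - c * 1)"
    by (rule Le_null_diff[OF f Le_null_cmult[OF one]]) simp
  then have "Le_null M E (\<lambda>x. real (Suc k) * (f x - c))" for k
    using Le_null_cmult by simp
  ultimately have s_null: "Le_null M E (s k)" for k
    unfolding s_def by (rule Le_null_normal_contraction[rotated 2]) (use f(2) in simp)
  have "(\<lambda>k. s k x) \<longlonglongrightarrow> indicator {x\<in>space M. c < f x} x" if "x \<in> space M" for x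
  proof (cases "c < f x")
    case True
    then obtain n :: nat where n: "1 < real n * (f x - c)"
      using ex_less_of_nat_mult[of "f x - c" 1] by auto
    have "s k x = 1" if "n \<le> k" for k
    proof -
      have "real n * (f x - c) \<le> real (Suc k) * (f x - c)"
        using True that by (intro mult_right_mono) auto
      with n show ?thesis by (simp add: s_def)
    qed
    then have "eventually (\<lambda>k. s k x = 1) sequentially"
      unfolding eventually_sequentially by blast
    then show ?thesis using True \<open>x \<in> space M\<close> by (simp add: tendsto_eventually)
  next
    case False
    then have "s k x = 0" for k by (simp add: s_def mult_nonneg_nonpos)
    then show ?thesis using False by simp
  qed
  then show ?thesis
    by (rule Le_null_tendsto[OF s_null]) (use f(2) in \<open>simp_all add: s_def\<close>)
qed

end

section \<open>Invariant sets\<close>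

lemma A_inv_subset_sets: "A_inv M E \<subseteq> sets M"
  by (auto simp: A_inv_def)

lemma A_inv_subset_Pow: "A_inv M E \<subseteq> Pow (space M)"
  by (auto simp: A_inv_def dest: sets.sets_into_space)

lemma space_sigma_A_inv: "space (sigma (space M) (A_inv M E)) = space M"
  by (rule space_measure_of[OF A_inv_subset_Pow])

lemma sets_sigma_A_inv: "sets (sigma (space M) (A_inv M E)) = sigma_sets (space M) (A_inv M E)"
  by (rule sets_measure_of[OF A_inv_subset_Pow])

lemma sigma_sets_A_inv_subset: "sigma_sets (space M) (A_inv M E) \<subseteq> sets M"
  by (rule sets.sigma_sets_subset[OF A_inv_subset_sets])

lemma borel_measurable_if_measurable_A_inv:
  assumes "f \<in> borel_measurable (sigma (space M) (A_inv M E))"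
  shows "f \<in> borel_measurable M"
proof -
  have "borel_measurable (sigma (space M) (A_inv M E)) \<subseteq> borel_measurable M"
    by (rule measurable_mono) (simp_all add: sets_sigma_A_inv space_sigma_A_inv sigma_sets_A_inv_subset)
  with assms show ?thesis by blast
qed

lemma null_or_conull_if_AE_indicator_eq:
  assumes A: "A \<in> sets M" and c: "AE x in M. indicator A x = (c::real)"
  shows "emeasure M A = 0 \<or> emeasure M (space M - A) = 0"
proof (cases "c = 1")
  case True
  from c have "AE x in M. x \<in> A" by eventually_elim (use True in \<open>auto simp: indicator_def split: if_splits\<close>)
  then show ?thesis using AE_iff_measurable[of "space M - A" M "\<lambda>x. x \<in> A"] A by auto
next
  case False
  from c have "AE x in M. x \<notin> A" by eventually_elim (use False in \<open>auto simp: indicator_def split: if_splits\<close>)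
  then show ?thesis using AE_iff_measurable[OF A, of "\<lambda>x. x \<notin> A"] sets.sets_into_space[OF A] by auto
qed

context nl_dirichlet_form
begin

lemma Le_null_indicator_if_E_invariant:
  assumes one: "Le_null M E (\<lambda>x. 1)" and S: "E_invariant M E S"
  shows "Le_null M E (indicator S)"
  unfolding Le_null_def E_e_null_def
proof (intro allI impI)
  fix t d :: real assume "0 < d"
  have "E_e_null M E (\<lambda>x. t)" using one by (simp add: Le_null_def)
  then obtain u where u: "\<And>n. u n \<in> L2 M" "conv_loc_meas M u (\<lambda>x. t)" "\<And>n. E (u n) \<le> ennreal d"
    using E_e_nullE[OF _ \<open>0 < d\<close>] by blast
  have S_sets: "S \<in> sets M" using S by (simp add: E_invariant_def)
  have "(\<lambda>x. indicator S x * u n x) \<in> L2 M" for n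
    by (rule L2_dominated[OF _ u(1)[of n]]) (use L2_measurable[OF u(1)] S_sets in \<open>simp_all add: indicator_def\<close>)
  moreover have "E (\<lambda>x. indicator S x * u n x) \<le> ennreal d" for n
    using S u(1) u(3)[of n] unfolding E_invariant_def by (blast intro: order_trans)
  moreover have "conv_loc_meas M (\<lambda>n x. indicator S x * u n x) (\<lambda>x. t * indicator S x)"
    by (rule conv_loc_meas_bound[OF u(2) zero_le_one L2_measurable[OF u(1)]]) (auto simp: indicator_def)
  ultimately show "\<exists>u. (\<forall>n. u n \<in> L2 M) \<and> conv_loc_meas M u (\<lambda>x. t * indicator S x) \<and>
      (\<forall>n. E (u n) \<le> ennreal d)"
    by (intro exI[of _ "\<lambda>n x. indicator S x * u n x"]) blast
qed

lemma Le_null_indicator_A_inv: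
  assumes one: "Le_null M E (\<lambda>x. 1)" and S: "S \<in> A_inv M E"
  shows "Le_null M E (indicator S)"
proof -
  have S_sets: "S \<in> sets M" using S by (simp add: A_inv_def)
  consider "E_invariant M E S" | "E_invariant M E (space M - S)" using S by (auto simp: A_inv_def)
  then show ?thesis
  proof cases
    case 1
    then show ?thesis by (rule Le_null_indicator_if_E_invariant[OF one])
  next
    case 2
    have "Le_null M E (\<lambda>x. 1 - indicator (space M - S) x)"
      by (rule Le_null_diff[OF one _ Le_null_indicator_if_E_invariant[OF one 2]]) (use S_sets in auto)
    then show ?thesis
      by (rule Le_null_cong_AE[OF _ AE_I2]) (use S_sets in \<open>auto simp: indicator_def\<close>)
  qed
qed

end

context sigma_finite_nl_dirichlet_form
begin

lemma E_clamp_le_if_E_e_null: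
  assumes h: "E_e_null M E h" "h \<in> borel_measurable M" "\<And>x. 0 \<le> h x" and g: "g \<in> L2 M"
  shows "E (\<lambda>x. max (min (g x) (h x)) (- h x)) \<le> E g"
proof (rule ennreal_le_epsilon)
  fix e :: real assume "0 < e"
  then obtain w where w_L2: "\<And>n. w n \<in> L2 M" and "conv_loc_meas M w h"
    and E_w: "\<And>n. E (w n) \<le> ennreal (e / 2)" and "\<And>n x. 0 \<le> w n x"
    using E_e_null_nonneg_approxE[OF h, of "e / 2"] by auto
  define z where "z n x = max (min (g x) (w n x)) (- w n x)" for n x
  define z0 where "z0 = (\<lambda>x. max (min (g x) (h x)) (- h x))"
  have z_meas: "z n \<in> borel_measurable M" for n
    unfolding z_def using L2_measurable[OF g] L2_measurable[OF w_L2] by measurable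
  have z0_meas: "z0 \<in> borel_measurable M"
    unfolding z0_def using L2_measurable[OF g] h(2) by measurable
  have z_bound: "\<bar>z n x\<bar> \<le> \<bar>g x\<bar>" for n x unfolding z_def by (rule abs_clamp_le) fact
  have z0_L2: "z0 \<in> L2 M"
    by (rule L2_dominated[OF z0_meas g]) (simp add: z0_def abs_clamp_le h(3))
  have "conv_loc_meas M z z0"
    by (rule conv_loc_meas_bound[OF \<open>conv_loc_meas M w h\<close> zero_le_one L2_measurable[OF w_L2] h(2)])
      (simp add: z_def z0_def abs_clamp_diff_le)
  moreover have "E (z n) \<le> E g + ennreal e" for n
  proof -
    have "E (z n) \<le> E g + E (w n) + E (w n)" unfolding z_def by (rule E_clamp_le[OF g w_L2])
    also have "\<dots> \<le> E g + ennreal (e / 2) + ennreal (e / 2)" by (intro add_mono order_refl E_w)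
    also have "\<dots> = E g + ennreal e" using \<open>0 < e\<close> by (simp add: add.assoc flip: ennreal_plus)
    finally show ?thesis .
  qed
  ultimately have "E z0 \<le> E g + ennreal e"
    using z_bound L2_dominated[OF z_meas g] by (intro E_lsc_conv_loc_meas[OF _ z0_L2 L2_abs[OF g]]) auto
  then show "E (\<lambda>x. max (min (g x) (h x)) (- h x)) \<le> E g + ennreal e"
    unfolding z0_def .
qed

lemma E_invariant_if_Le_null_indicator:
  assumes B: "B \<in> sets M" and null: "Le_null M E (indicator B)"
  shows "E_invariant M E B"
  unfolding E_invariant_def
proof (intro conjI ballI B)
  fix g assume g: "g \<in> L2 M"
  define h where "h m x = indicator B x * max (min (g x) (real m)) (- real m)" for m :: nat and x
  have h_bound: "\<bar>h m x\<bar> \<le> \<bar>g x\<bar>" for m x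
    using abs_clamp_le[of "real m" "g x"] by (simp add: h_def indicator_def)
  have h_L2: "h m \<in> L2 M" for m
    by (rule L2_dominated[OF _ g h_bound]) (use L2_measurable[OF g] B in \<open>simp add: h_def\<close>)
  have g_B_L2: "(\<lambda>x. indicator B x * g x) \<in> L2 M"
    by (rule L2_dominated[OF _ g]) (use L2_measurable[OF g] B in \<open>simp_all add: indicator_def\<close>)
  have "(\<lambda>m. h m x) \<longlonglongrightarrow> indicator B x * g x" for x
  proof (rule tendsto_eventually)
    obtain m0 :: nat where "\<bar>g x\<bar> \<le> real m0" using real_arch_simple by blast
    then have "max (min (g x) (real m)) (- real m) = g x" if "m0 \<le> m" for m
      using that by (auto simp: min_def max_def)
    then show "eventually (\<lambda>m. h m x = indicator B x * g x) sequentially"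
      unfolding eventually_sequentially h_def by auto
  qed
  moreover have "E (h m) \<le> E g" for m
  proof -
    have "E_e_null M E (\<lambda>x. real m * indicator B x)" using null by (simp add: Le_null_def)
    then have "E (\<lambda>x. max (min (g x) (real m * indicator B x)) (- (real m * indicator B x))) \<le> E g"
      using B by (intro E_clamp_le_if_E_e_null g) simp_all
    moreover have "(\<lambda>x. max (min (g x) (real m * indicator B x)) (- (real m * indicator B x))) = h m"
      by (auto simp: fun_eq_iff h_def indicator_def)
    ultimately show ?thesis by simp
  qed
  ultimately show "E (\<lambda>x. indicator B x * g x) \<le> E g"
    by (intro E_lsc_AE[OF h_L2 g_B_L2 L2_abs[OF g]] AE_I2) (simp_all add: h_bound)
qed

lemma measurable_A_inv_if_Le_null:
  assumes one: "Le_null M E (\<lambda>x. 1)" and f: "Le_null M E f" "f \<in> borel_measurable M"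
  shows "f \<in> borel_measurable (sigma (space M) (A_inv M E))"
  unfolding borel_measurable_iff_greater
proof
  fix c
  have B: "{x\<in>space M. c < f x} \<in> sets M" using f(2) by measurable
  then have "E_invariant M E {x\<in>space M. c < f x}"
    by (rule E_invariant_if_Le_null_indicator[OF _ Le_null_indicator_greater[OF one f]])
  with B have "{x\<in>space M. c < f x} \<in> A_inv M E" by (simp add: A_inv_def)
  then show "{x\<in>space (sigma (space M) (A_inv M E)). c < f x} \<in> sets (sigma (space M) (A_inv M E))"
    unfolding space_sigma_A_inv sets_sigma_A_inv by (rule sigma_sets.Basic)
qed

lemma Le_null_indicator_sigma_sets:
  assumes one: "Le_null M E (\<lambda>x. 1)" and S: "S \<in> sigma_sets (space M) (A_inv M E)"
  shows "Le_null M E (indicator S)"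
  using S
proof induction
  case (Basic S)
  then show ?case by (rule Le_null_indicator_A_inv[OF one])
next
  case Empty
  then show ?case using Le_null_zero by simp
next
  case (Compl S)
  then have S_sets: "S \<in> sets M" using sigma_sets_A_inv_subset by blast
  have "Le_null M E (\<lambda>x. 1 - indicator S x)"
    by (rule Le_null_diff[OF one _ Compl.IH]) (use S_sets in auto)
  then show ?case
    by (rule Le_null_cong_AE[OF _ AE_I2]) (use S_sets in \<open>auto simp: indicator_def\<close>)
next
  case (Union S)
  then have S_sets: "S i \<in> sets M" for i using sigma_sets_A_inv_subset by blast
  have "Le_null M E (indicator (\<Union>i<n. S i))" for n
  proof (induction n)
    case 0
    then show ?case using Le_null_zero by simp
  next
    case (Suc n)
    have "Le_null M E (\<lambda>x. max (indicator (S n) x) (indicator (\<Union>i<n. S i) x))"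
      by (rule Le_null_max[OF Union.IH _ Suc.IH]) (use S_sets in auto)
    then show ?case by (simp add: lessThan_Suc indicator_union_max)
  qed
  then show ?case
    by (rule Le_null_tendsto[OF _ LIMSEQ_indicator_UN]) (use S_sets in auto)
qed

lemma Le_null_simple_function_A_inv:
  assumes one: "Le_null M E (\<lambda>x. 1)" and F: "simple_function (sigma (space M) (A_inv M E)) F"
  shows "Le_null M E F"
proof -
  let ?N = "sigma (space M) (A_inv M E)"
  have level_sets: "F -` {y} \<inter> space M \<in> sigma_sets (space M) (A_inv M E)" for y
    using simple_functionD(2)[OF F, of "{y}"] by (simp add: sets_sigma_A_inv space_sigma_A_inv)
  have level_sets_M: "F -` {y} \<inter> space M \<in> sets M" for y
    using level_sets sigma_sets_A_inv_subset[of M E] by blast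
  have summand_meas: "(\<lambda>x. indicator (F -` {y} \<inter> space M) x * y) \<in> borel_measurable M" for y
    using level_sets_M[of y] by measurable
  have "Le_null M E (\<lambda>x. \<Sum>y\<in>F ` space ?N. indicator (F -` {y} \<inter> space M) x * y)"
  proof (rule Le_null_sum[OF _ _ summand_meas])
    show "finite (F ` space ?N)" by (rule simple_functionD(1)[OF F])
    show "Le_null M E (\<lambda>x. indicator (F -` {y} \<inter> space M) x * y)" for y
      using Le_null_cmult[OF Le_null_indicator_sigma_sets[OF one level_sets], of y]
      by (simp add: mult.commute)
  qed
  then show ?thesis
  proof (rule Le_null_cong_AE[OF _ AE_I2])
    show "(\<Sum>y\<in>F ` space ?N. indicator (F -` {y} \<inter> space M) x * y) = F x" if "x \<in> space M" for x
    proof -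
      have "x \<in> space ?N" using that by (simp only: space_sigma_A_inv)
      from simple_function_indicator_representation_banach[OF F this]
      show ?thesis by (simp only: space_sigma_A_inv real_scaleR_def)
    qed
    show "(\<lambda>x. \<Sum>y\<in>F ` space ?N. indicator (F -` {y} \<inter> space M) x * y) \<in> borel_measurable M"
      by (rule borel_measurable_sum[OF summand_meas])
    show "F \<in> borel_measurable M"
      by (rule borel_measurable_if_measurable_A_inv[OF borel_measurable_simple_function[OF F]])
  qed
qed

lemma Le_null_if_measurable_A_inv:
  assumes one: "Le_null M E (\<lambda>x. 1)" and g: "g \<in> borel_measurable (sigma (space M) (A_inv M E))"
  shows "Le_null M E g"
proof -
  obtain F where F: "\<And>i. simple_function (sigma (space M) (A_inv M E)) (F i)"
    "\<And>x. x \<in> space M \<Longrightarrow> (\<lambda>i. F i x) \<longlonglongrightarrow> g x"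
    using borel_measurable_implies_sequence_metric[OF g, of 0] by (auto simp: space_sigma_A_inv)
  show ?thesis
  proof (rule Le_null_tendsto[OF Le_null_simple_function_A_inv[OF one F(1)] F(2)])
    show "F i \<in> borel_measurable M" for i
      by (rule borel_measurable_if_measurable_A_inv[OF borel_measurable_simple_function[OF F(1)]])
    show "g \<in> borel_measurable M" by (rule borel_measurable_if_measurable_A_inv[OF g])
  qed
qed

lemma Le_norm_eq_0_iff_AE_measurable_A_inv:
  assumes one: "Le_null M E (\<lambda>x. 1)" and f: "f \<in> borel_measurable M"
  shows "Le_norm M E f = 0 \<longleftrightarrow> (\<exists>g\<in>borel_measurable (sigma (space M) (A_inv M E)). AE x in M. f x = g x)"
proof
  assume "Le_norm M E f = 0"
  then have "Le_null M E f" using Le_norm_eq_0_iff[OF f] by blast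
  then show "\<exists>g\<in>borel_measurable (sigma (space M) (A_inv M E)). AE x in M. f x = g x"
    using measurable_A_inv_if_Le_null[OF one _ f] by blast
next
  assume "\<exists>g\<in>borel_measurable (sigma (space M) (A_inv M E)). AE x in M. f x = g x"
  then obtain g where g: "g \<in> borel_measurable (sigma (space M) (A_inv M E))" "AE x in M. f x = g x"
    by blast
  have "Le_null M E f"
    by (rule Le_null_cong_AE[OF Le_null_if_measurable_A_inv[OF one g(1)] _
          borel_measurable_if_measurable_A_inv[OF g(1)] f]) (use g(2) in auto)
  then show "Le_norm M E f = 0" by (rule Le_norm_eq_0_if_Le_null)
qed

end

theorem corollary3p18:
  fixes M :: "'a measure" and E :: "('a \<Rightarrow> real) \<Rightarrow> ennreal"
  assumes "sigma_finite_measure M"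
    and "nonlinear_dirichlet_form M E"
    and "(\<lambda>x. 1) \<in> M_Ee M E"
    and "Le_norm M E (\<lambda>x. 1) = 0"
  shows "(\<forall>f\<in>borel_measurable M. (Le_norm M E f = 0 \<longleftrightarrow>
           (\<exists>g\<in>borel_measurable (sigma (space M) (A_inv M E)). AE x in M. f x = g x))) \<and>
         ((\<forall>f\<in>borel_measurable M. (Le_norm M E f = 0 \<longleftrightarrow> (\<exists>c::real. AE x in M. f x = c)))
           \<longrightarrow> irreducible_form M E)"
proof -
  interpret sigma_finite_nl_dirichlet_form M E
    using assms(1,2) by (simp add: sigma_finite_nl_dirichlet_form_def nl_dirichlet_form_def)
  have one: "Le_null M E (\<lambda>x. 1)" using assms(4) Le_norm_eq_0_iff[of "\<lambda>x. 1"] by simp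
  note kernel = Le_norm_eq_0_iff_AE_measurable_A_inv[OF one]
  show ?thesis
  proof (intro conjI ballI impI kernel)
    assume constants: "\<forall>f\<in>borel_measurable M. Le_norm M E f = 0 \<longleftrightarrow> (\<exists>c::real. AE x in M. f x = c)"
    show "irreducible_form M E" unfolding irreducible_form_def
    proof (intro allI impI)
      fix A assume "E_invariant M E A"
      then have A: "A \<in> sets M" "A \<in> A_inv M E" by (auto simp: E_invariant_def A_inv_def)
      then have "indicator A \<in> borel_measurable (sigma (space M) (A_inv M E))"
        by (intro borel_measurable_indicator) (simp add: sets_sigma_A_inv sigma_sets.Basic)
      then have "Le_norm M E (indicator A) = 0" using kernel[of "indicator A"] A(1) by auto
      then obtain c :: real where "AE x in M. indicator A x = c" using constants A(1) by auto
      then show "emeasure M A = 0 \<or> emeasure M (space M - A) = 0"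
        by (rule null_or_conull_if_AE_indicator_eq[OF A(1)])
    qed
  qed
qed

end
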